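(* Fix a master $m$, a finite nonempty set $\Omega_m$ of workers, and for each $n\in\Omega_m$ parameters $u_{m,n}>0$, $a_{m,n}>0$, and let $L_m>0$. Then the optimization problem $$\min_{\{l_{m,n}\}_{n\in\Omega_m},\,t_m} \; t_m \quad\text{s.t.}\quad L_m-\sum_{n\in\Omega_m} l_{m,n}\left(1-e^{-\frac{u_{m,n}}{l_{m,n}}\left(t_m-a_{m,n}l_{m,n}\right)}\right)\le 0,\qquad l_{m,n}\ge 0\ \ \forall n\in\Omega_m,$$ is a convex optimization problem. (Here the constraint function is considered on the domain $l_{m,n}>0$.)
   Context: This is the load-allocation problem for a single master $m$ in a coded distributed computing system: master $m$ must obtain $L_m$ MDS-coded row-vector products, worker $n\in\Omega_m$ is allocated $l_{m,n}$ coded rows, and the processing time of worker $n$ on $l$ rows is a shifted exponential random variable $T$ with $\mathbb{P}[T\le t]=1-e^{-\frac{u_{m,n}}{l}(t-a_{m,n}l)}$ for $t\ge a_{m,n}l$ (and $0$ otherwise). The sum in the constraint is the expected number of results received by time $t_m$ (in the regime $t_m\ge a_{m,n}l_{m,n}$), and $t_m$ is the approximate completion time. *)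

theory Defs
  imports "HOL-Analysis.Analysis"
begin

text \<open>Workers of master m are the elements of a finite type 'w (so Omega_m = UNIV).
  A decision vector is a pair (l, t) with l :: real^'w the loads and t the completion time.\<close>

definition expected_results ::
  "('w::finite \<Rightarrow> real) \<Rightarrow> ('w \<Rightarrow> real) \<Rightarrow> real^'w \<Rightarrow> real \<Rightarrow> real" where
  "expected_results u a l t =
     (\<Sum>n\<in>UNIV. l$n * (1 - exp (- (u n / l$n) * (t - a n * l$n))))"

definition load_constraint ::
  "real \<Rightarrow> ('w::finite \<Rightarrow> real) \<Rightarrow> ('w \<Rightarrow> real) \<Rightarrow> (real^'w) \<times> real \<Rightarrow> real" where
  "load_constraint L u a x = L - expected_results u a (fst x) (snd x)"

definition problem_domain :: "((real^'w::finite) \<times> real) set" where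
  "problem_domain = {x. \<forall>n. fst x $ n > 0}"

end

theory Submission imports Defs begin

text \<open>For \<open>l > 0\<close> the expected number of results of a worker rewrites as
  \<open>l - exp (u a) \<cdot> l exp (- u t / l)\<close>, and \<open>(l, t) \<mapsto> l exp (- u t / l)\<close> is the perspective of
  the convex function \<open>s \<mapsto> exp (- u s)\<close>, hence jointly convex on \<open>l > 0\<close>. So each summand of
  the expected number of results is concave and the constraint function is convex; objective and
  sign constraints are linear.\<close>

lemma convex_on_cong:
  assumes "\<And>x. x \<in> S \<Longrightarrow> f x = g x"
  shows "convex_on S f \<longleftrightarrow> convex_on S g"
  using assms by (auto simp: convex_on_def convexD)

lemma convex_on_linear:
  assumes "linear h" and "convex S"
  shows "convex_on S h"
  using assms by (intro convex_onI) (simp_all add: linear_add linear_scale)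

lemma convex_on_compose_linear:
  assumes "linear A" and "convex_on T g" and "A ` S \<subseteq> T" and "convex S"
  shows "convex_on S (\<lambda>x. g (A x))"
proof (rule convex_onI[OF _ \<open>convex S\<close>])
  fix t :: real and x y
  assume "0 < t" "t < 1" "x \<in> S" "y \<in> S"
  then show "g (A ((1 - t) *\<^sub>R x + t *\<^sub>R y)) \<le> (1 - t) * g (A x) + t * g (A y)"
    using assms convex_onD[OF \<open>convex_on T g\<close>, of t "A x" "A y"]
    by (auto simp: linear_add linear_scale)
qed

lemma convex_on_sum_fun:
  assumes "finite I" and "convex S" and "\<And>i. i \<in> I \<Longrightarrow> convex_on S (f i)"
  shows "convex_on S (\<lambda>x. \<Sum>i\<in>I. f i x)"
  using assms by (induction I rule: finite_induct) (auto simp: convex_on_const)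

lemma convex_combination_pos:
  fixes x y \<theta> :: real
  assumes "x > 0" and "y > 0" and "0 \<le> \<theta>" and "\<theta> \<le> 1"
  shows "(1 - \<theta>) * x + \<theta> * y > 0"
  using assms by (cases "\<theta> = 1") (auto intro: add_pos_nonneg)

lemma convex_on_perspective:
  fixes f :: "'a::real_vector \<Rightarrow> real"
  assumes "convex_on UNIV f"
  shows "convex_on {p :: real \<times> 'a. fst p > 0} (\<lambda>p. fst p * f (snd p /\<^sub>R fst p))"
proof (rule convex_onI)
  show "convex {p :: real \<times> 'a. fst p > 0}"
    using convex_combination_pos by (auto simp: convex_alt)
  fix \<theta> :: real and p q :: "real \<times> 'a"
  assume \<theta>: "0 < \<theta>" "\<theta> < 1" and "p \<in> {p. fst p > 0}" "q \<in> {p. fst p > 0}"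
  then obtain la ta lb tb where p: "p = (la, ta)" and q: "q = (lb, tb)"
    and la: "la > 0" and lb: "lb > 0"
    by (cases p, cases q) auto
  define l where "l = (1 - \<theta>) * la + \<theta> * lb"
  have l: "l > 0"
    unfolding l_def using \<theta> la lb by (intro add_pos_pos) auto
  define \<alpha> where "\<alpha> = (1 - \<theta>) * la / l"
  have wa: "l * \<alpha> = (1 - \<theta>) * la"
    using l by (simp add: \<alpha>_def)
  have wb: "l * (1 - \<alpha>) = \<theta> * lb"
    using wa by (simp add: right_diff_distrib l_def)
  have \<alpha>: "0 \<le> \<alpha>" "\<alpha> \<le> 1"
  proof -
    have "0 \<le> l * \<alpha>" and "0 \<le> l * (1 - \<alpha>)"
      using wa wb la lb \<theta> by simp_all
    then show "0 \<le> \<alpha>" "\<alpha> \<le> 1"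
      using l by (simp_all add: zero_le_mult_iff)
  qed
  have "(1 - \<alpha>) / lb = \<theta> / l" and "\<alpha> / la = (1 - \<theta>) / l"
    using wa wb l la lb by (simp_all add: frac_eq_eq mult.commute)
  then have mix: "((1 - \<theta>) *\<^sub>R ta + \<theta> *\<^sub>R tb) /\<^sub>R l = (1 - \<alpha>) *\<^sub>R (tb /\<^sub>R lb) + \<alpha> *\<^sub>R (ta /\<^sub>R la)"
    by (simp add: scaleR_add_right divide_inverse_commute mult.commute add.commute)
  have "l * f (((1 - \<theta>) *\<^sub>R ta + \<theta> *\<^sub>R tb) /\<^sub>R l)
      \<le> l * ((1 - \<alpha>) * f (tb /\<^sub>R lb) + \<alpha> * f (ta /\<^sub>R la))"
    unfolding mix using l \<alpha> convex_onD[OF assms, of \<alpha> "tb /\<^sub>R lb" "ta /\<^sub>R la"] by simp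
  also have "\<dots> = (l * (1 - \<alpha>)) * f (tb /\<^sub>R lb) + (l * \<alpha>) * f (ta /\<^sub>R la)"
    by (simp add: algebra_simps)
  also have "\<dots> = (1 - \<theta>) * (la * f (ta /\<^sub>R la)) + \<theta> * (lb * f (tb /\<^sub>R lb))"
    by (simp only: wa wb mult.assoc add.commute)
  finally show "fst ((1 - \<theta>) *\<^sub>R p + \<theta> *\<^sub>R q) * f (snd ((1 - \<theta>) *\<^sub>R p + \<theta> *\<^sub>R q) /\<^sub>R fst ((1 - \<theta>) *\<^sub>R p + \<theta> *\<^sub>R q))
      \<le> (1 - \<theta>) * (fst p * f (snd p /\<^sub>R fst p)) + \<theta> * (fst q * f (snd q /\<^sub>R fst q))"
    by (simp add: p q l_def)
qed

lemma convex_problem_domain: "convex (problem_domain :: ((real^'w::finite) \<times> real) set)"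
  using convex_combination_pos by (auto simp: convex_alt problem_domain_def)

lemma linear_load_coordinate: "linear (\<lambda>x :: (real^'w) \<times> real. fst x $ n)"
  by (simp add: linearI)

lemma worker_results_eq:
  fixes l u t a :: real
  assumes "l > 0"
  shows "l * (1 - exp (- (u / l) * (t - a * l))) = l - exp (u * a) * (l * exp (- u * (t / l)))"
proof -
  have "- (u / l) * (t - a * l) = u * a + - u * (t / l)"
    using assms by (simp add: diff_divide_distrib right_diff_distrib)
  then have "exp (- (u / l) * (t - a * l)) = exp (u * a) * exp (- u * (t / l))"
    by (simp only: exp_add)
  then show ?thesis
    by (simp add: algebra_simps)
qed

lemma load_constraint_eq:
  assumes "x \<in> problem_domain"
  shows "load_constraint L u a x
    = L + (\<Sum>n\<in>UNIV. exp (u n * a n) * (fst x $ n * exp (- u n * (snd x / fst x $ n))) - fst x $ n)"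
proof -
  have "expected_results u a (fst x) (snd x)
      = (\<Sum>n\<in>UNIV. fst x $ n - exp (u n * a n) * (fst x $ n * exp (- u n * (snd x / fst x $ n))))"
    using assms unfolding expected_results_def problem_domain_def
    by (intro sum.cong refl worker_results_eq) simp
  then show ?thesis
    by (simp add: load_constraint_def sum_subtractf)
qed

lemma convex_on_load_constraint:
  "convex_on (problem_domain :: ((real^'w::finite) \<times> real) set) (load_constraint L u a)"
proof -
  have persp: "convex_on problem_domain
      (\<lambda>x :: (real^'w) \<times> real. fst x $ n * exp (- u n * (snd x / fst x $ n)))" for n
  proof -
    have "convex_on UNIV (\<lambda>s. exp (- u n * s))"
      by (rule convex_on_compose_linear[OF _ exp_convex]) (auto simp: linearI algebra_simps)
    then have "convex_on {p :: real \<times> real. fst p > 0} (\<lambda>p. fst p * exp (- u n * (snd p / fst p)))"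
      using convex_on_perspective by (fastforce simp: divide_inverse mult.commute)
    from convex_on_compose_linear[OF _ this _ convex_problem_domain, of "\<lambda>x. (fst x $ n, snd x)"]
    show ?thesis
      by (simp add: linearI problem_domain_def image_subset_iff)
  qed
  have "convex_on problem_domain (\<lambda>x :: (real^'w) \<times> real.
      L + (\<Sum>n\<in>UNIV. exp (u n * a n) * (fst x $ n * exp (- u n * (snd x / fst x $ n))) - fst x $ n))"
    using convex_problem_domain persp linear_load_coordinate
    by (intro convex_on_add convex_on_sum_fun convex_on_diff convex_on_cmul)
      (auto simp: convex_on_const concave_on_iff convex_on_linear linear_compose_neg)
  then show ?thesis
    by (subst convex_on_cong[OF load_constraint_eq]) simp_all
qed

theorem lemma1:
  fixes u a :: "'w::finite \<Rightarrow> real" and L :: real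
  assumes "\<And>n. u n > 0" and "\<And>n. a n > 0" and "L > 0"
  shows "convex (problem_domain :: ((real^'w) \<times> real) set)
    \<and> convex_on problem_domain (\<lambda>x::(real^'w) \<times> real. snd x)
    \<and> convex_on problem_domain (load_constraint L u a)
    \<and> (\<forall>n. convex_on problem_domain (\<lambda>x::(real^'w) \<times> real. - (fst x $ n)))"
proof (intro conjI allI)
  show "convex (problem_domain :: ((real^'w) \<times> real) set)"
    by (rule convex_problem_domain)
  show "convex_on problem_domain (\<lambda>x::(real^'w) \<times> real. snd x)"
    by (intro convex_on_linear convex_problem_domain) (simp add: linearI)
  show "convex_on problem_domain (load_constraint L u a)"
    by (rule convex_on_load_constraint)
  show "convex_on problem_domain (\<lambda>x::(real^'w) \<times> real. - (fst x $ n))" for n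
    by (intro convex_on_linear convex_problem_domain linear_compose_neg linear_load_coordinate)
qed

end
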